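(* Under the setting described in the context, there exists $c_{\lambda_i}>0$, independent of $h$, such that $$\|\mathcal{P}_{m_h^\ell}v\|_{a_h^\ell}\le c_{\lambda_i}\|v\|_{m_h^\ell}\qquad\text{for all }v\in H^1(\Omega,\Gamma).$$
   Context: Let $d\in\{2,3\}$ and $\Omega\subset\mathbb{R}^d$ a nonempty bounded connected open set with smooth boundary $\Gamma=\partial\Omega$; fix integers $r\ge1$, $k\ge1$; $\Omega$ is at least $C^{r+2}$ and $C^{k+1}$ regular. $H^1(\Omega,\Gamma)=\{u\in H^1(\Omega):u|_\Gamma\in H^1(\Gamma)\}$; $\nabla_\Gamma$ is the tangential gradient; $b(x)=x-\mathrm{d}(x)\nabla\mathrm{d}(x)$, $\mathrm{d}$ the signed distance to $\Gamma$, is the orthogonal projection onto $\Gamma$ near $\Gamma$. Continuous problem: $a(u,v)=\int_\Omega\nabla u\cdot\nabla v\,dx+\int_\Gamma\nabla_\Gamma u\cdot\nabla_\Gamma v\,ds+\int_\Gamma uv\,ds$, $m(u,v)=\int_\Omega uv\,dx$; eigenvalues $0<\lambda_1\le\lambda_2\le\dots$ of $a(u,v)=\lambda m(u,v)$ for all $v\in H^1(\Omega,\Gamma)$, counted with multiplicity. Fix $\lambda_i$ of multiplicity $N$, $J=\{i,\dots,i+N-1\}$. The mesh size $h$ is assumed small enough that the discrete eigenvalues $\Lambda_j$, $j\in J$, are bounded by a constant depending only on $\lambda_i$. Meshes and lift: $\mathcal{T}_h^{(1)}$ quasi-uniform simplicial meshes of size $h$ with boundary vertices on $\Gamma$, $T=F_T(\hat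 T)$ with $F_T$ affine. For $T$ with at least two vertices on $\Gamma$ (barycentric coordinates $\lambda_l$, vertices $\hat v_l$ of $\hat T$, $\varepsilon_l=1$ iff $F_T(\hat v_l)\in\Gamma$, $\lambda^*=\sum\varepsilon_l\lambda_l$, $\hat\sigma=\{\lambda^*=0\}$, $\hat y=\frac1{\lambda^*}\sum\varepsilon_l\lambda_l\hat v_l$): $F_T^{(e)}=F_T$ on $\hat\sigma$, $F_T^{(e)}(\hat x)=F_T(\hat x)+(\lambda^* )^{r+2}(b(F_T(\hat y))-F_T(\hat y))$ otherwise; else $F_T^{(e)}=F_T$. $F_T^{(r)}$ is the $\mathbb{P}^r$-Lagrange interpolant of $F_T^{(e)}$, $T^{(r)}=F_T^{(r)}(\hat T)$, $\Omega_h=\bigcup T^{(r)}$, $\Gamma_h=\partial\Omega_h$. $G_h:\Omega_h\to\Omega$ equals $F^{(e)}_{T^{(r)}}\circ(F_T^{(r)})^{-1}$ on $T^{(r)}$ (formula of $F_T^{(e)}$ with $F_T$ replaced by $F_T^{(r)}$); continuous, elementwise $C^1$-diffeomorphism, $G_h|_{\Gamma_h}=b$. Lift: $v^\ell\circ G_h=v$. Discrete: $\mathbb{V}_h=\{\chi\in C^0(\Omega_h):\chi|_{T^{(r)}}\circ F_T^{(r)}\in\mathbb{P}^k(\hat T)\}$; $a_h(U,V)=\int_{\Omega_h}\nabla U\cdot\nabla V+\int_{\Gamma_h}\nabla_{\Gamma_h}U\cdot\nabla_{\Gamma_h}V+\int_{\Gamma_h}UV$, $m_h(U,V)=\int_{\Omega_h}UV$;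 for $v,w\in H^1(\Omega,\Gamma)$, $a_h^\ell(v,w)=a_h(v\circ G_h,w\circ G_h)$, $m_h^\ell(v,w)=m_h(v\circ G_h,w\circ G_h)$, norms $\|v\|_{a_h^\ell}=a_h^\ell(v,v)^{1/2}$, $\|v\|_{m_h^\ell}=m_h^\ell(v,v)^{1/2}$. Discrete eigenpairs $(\Lambda_p,U_p)$: $a_h(U_p,V)=\Lambda_pm_h(U_p,V)$ for all $V\in\mathbb{V}_h$, increasing eigenvalues, $(U_p)$ $m_h$-orthonormal. $\mathbb{F}_h^\ell=\mathrm{span}\{U_j^\ell:j\in J\}$ and $\mathcal{P}_{m_h^\ell}v\in\mathbb{F}_h^\ell$ is defined by $m_h^\ell(\mathcal{P}_{m_h^\ell}v,w)=m_h^\ell(v,w)$ for all $w\in\mathbb{F}_h^\ell$. *)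

theory Defs
  imports "HOL-Analysis.Analysis"
begin

text \<open>Abstract rendering of the lifted discrete forms. A form on a set S
  is a real-valued function of two arguments; we require bilinearity and symmetry
  on a linear subspace S.\<close>

definition sym_bilinear_on :: "'f::real_vector set \<Rightarrow> ('f \<Rightarrow> 'f \<Rightarrow> real) \<Rightarrow> bool" where
  "sym_bilinear_on S b \<longleftrightarrow>
     (\<forall>u\<in>S. \<forall>v\<in>S. b u v = b v u) \<and>
     (\<forall>u\<in>S. \<forall>v\<in>S. \<forall>w\<in>S. \<forall>\<alpha> \<beta>. b (\<alpha> *\<^sub>R u + \<beta> *\<^sub>R v) w = \<alpha> * b u w + \<beta> * b v w)"

definition psd_on :: "'f set \<Rightarrow> ('f \<Rightarrow> 'f \<Rightarrow> real) \<Rightarrow> bool" where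
  "psd_on S b \<longleftrightarrow> (\<forall>u\<in>S. 0 \<le> b u u)"

definition form_norm :: "('f \<Rightarrow> 'f \<Rightarrow> real) \<Rightarrow> 'f \<Rightarrow> real" where
  "form_norm b v = sqrt (b v v)"

definition form_proj :: "('f \<Rightarrow> 'f \<Rightarrow> real) \<Rightarrow> 'f set \<Rightarrow> 'f \<Rightarrow> 'f" where
  "form_proj b F v = (THE p. p \<in> F \<and> (\<forall>w\<in>F. b p w = b v w))"

end

theory Submission
  imports Defs
begin

text \<open>On the span of finitely many \<open>m\<close>-orthonormal vectors \<open>y\<close>, the \<open>m\<close>-projection of \<open>v\<close>
  is the Fourier sum \<open>P = \<Sum> m(v,y) y\<close>, and Bessel's inequality gives
  \<open>\<Sum> m(v,y)\<^sup>2 \<le> m(v,v)\<close>. If moreover each \<open>y\<close> is an eigenvector, \<open>a(y,w) = \<lambda>\<^sub>y m(y,w)\<close>,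
  with \<open>\<lambda>\<^sub>y \<le> K\<close>, then \<open>a(P,P) = \<Sum> \<lambda>\<^sub>y m(v,y)\<^sup>2 \<le> K m(v,v)\<close>. With
  \<open>K = max C 1\<close> (positive even if \<open>C \<le> 0\<close>) the constant \<open>sqrt K\<close> depends only on the
  uniform bound \<open>C\<close> of the cluster eigenvalues, not on \<open>h\<close>.\<close>

lemma sym_bilinear_on_commute:
  "sym_bilinear_on S b \<Longrightarrow> u \<in> S \<Longrightarrow> v \<in> S \<Longrightarrow> b u v = b v u"
  unfolding sym_bilinear_on_def by blast

lemma sym_bilinear_on_linear_left:
  "sym_bilinear_on S b \<Longrightarrow> u \<in> S \<Longrightarrow> v \<in> S \<Longrightarrow> w \<in> S \<Longrightarrow>
    b (\<alpha> *\<^sub>R u + \<beta> *\<^sub>R v) w = \<alpha> * b u w + \<beta> * b v w"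
  unfolding sym_bilinear_on_def by blast

lemma sym_bilinear_on_zero_left:
  "sym_bilinear_on S b \<Longrightarrow> w \<in> S \<Longrightarrow> b 0 w = 0"
  using sym_bilinear_on_linear_left[of S b w w w 0 0] by simp

lemma sym_bilinear_on_diff_left:
  "sym_bilinear_on S b \<Longrightarrow> u \<in> S \<Longrightarrow> v \<in> S \<Longrightarrow> w \<in> S \<Longrightarrow> b (u - v) w = b u w - b v w"
  using sym_bilinear_on_linear_left[of S b u v w 1 "-1"] by simp

lemma sym_bilinear_on_diff_right:
  assumes b: "sym_bilinear_on S b" and S: "subspace S" and uvw: "u \<in> S" "v \<in> S" "w \<in> S"
  shows "b w (u - v) = b w u - b w v"
proof -
  have "u - v \<in> S" using S uvw(1,2) by (rule subspace_diff)
  with uvw(3) have "b w (u - v) = b (u - v) w" by (rule sym_bilinear_on_commute[OF b])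
  also have "\<dots> = b u w - b v w" using uvw by (rule sym_bilinear_on_diff_left[OF b])
  finally show ?thesis using uvw sym_bilinear_on_commute[OF b] by metis
qed

lemma sym_bilinear_on_sum_left:
  assumes "sym_bilinear_on S b" "subspace S" "finite E" "E \<subseteq> S" "w \<in> S"
  shows "b (\<Sum>y\<in>E. c y *\<^sub>R y) w = (\<Sum>y\<in>E. c y * b y w)"
  using assms(3,4)
proof (induction E rule: finite_induct)
  case empty
  then show ?case using sym_bilinear_on_zero_left[OF assms(1,5)] by simp
next
  case (insert a F)
  have "(\<Sum>y\<in>F. c y *\<^sub>R y) \<in> S"
    using insert by (intro subspace_sum[OF assms(2)] subspace_scale[OF assms(2)]) auto
  then have "b (c a *\<^sub>R a + 1 *\<^sub>R (\<Sum>y\<in>F. c y *\<^sub>R y)) w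
      = c a * b a w + 1 * b (\<Sum>y\<in>F. c y *\<^sub>R y) w"
    using insert by (intro sym_bilinear_on_linear_left[OF assms(1)] assms(5)) auto
  then show ?case using insert by simp
qed

definition form_orthonormal :: "('f \<Rightarrow> 'f \<Rightarrow> real) \<Rightarrow> 'f set \<Rightarrow> bool" where
  "form_orthonormal b E \<longleftrightarrow> (\<forall>y\<in>E. \<forall>z\<in>E. b y z = (if y = z then 1 else 0))"

lemma form_orthonormal_image:
  assumes "\<forall>p\<in>I. \<forall>q\<in>I. b (U p) (U q) = (if p = q then 1 else 0)"
  shows "form_orthonormal b (U ` I)"
  unfolding form_orthonormal_def
proof (intro ballI)
  fix y z assume "y \<in> U ` I" "z \<in> U ` I"
  then obtain p q where pq: "p \<in> I" "q \<in> I" "y = U p" "z = U q" by blast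
  show "b y z = (if y = z then 1 else 0)"
  proof (cases "y = z")
    case True
    then show ?thesis using assms pq(1,3) by (metis imageI)
  next
    case False
    then have "p \<noteq> q" using pq by blast
    then show ?thesis using assms pq False by simp
  qed
qed

lemma form_orthonormal_coefficient:
  assumes "sym_bilinear_on S b" "subspace S" "finite E" "E \<subseteq> S"
    and "form_orthonormal b E" "z \<in> E"
  shows "b (\<Sum>y\<in>E. d y *\<^sub>R y) z = d z"
proof -
  have "b (\<Sum>y\<in>E. d y *\<^sub>R y) z = (\<Sum>y\<in>E. d y * b y z)"
    using assms(4,6) by (intro sym_bilinear_on_sum_left[OF assms(1-4)]) auto
  also have "\<dots> = (\<Sum>y\<in>E. if y = z then d y else 0)"
    using assms(5,6) unfolding form_orthonormal_def by (intro sum.cong) auto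
  finally show ?thesis using assms(3,6) by simp
qed

lemma form_orthonormal_coefficient_right:
  assumes "sym_bilinear_on S b" "subspace S" "finite E" "E \<subseteq> S"
    and "form_orthonormal b E" "z \<in> E"
  shows "b z (\<Sum>y\<in>E. d y *\<^sub>R y) = d z"
proof -
  have "(\<Sum>y\<in>E. d y *\<^sub>R y) \<in> S"
    using assms(2,4) by (intro subspace_sum subspace_scale) auto
  then show ?thesis
    using assms(4,6) form_orthonormal_coefficient[OF assms] sym_bilinear_on_commute[OF assms(1)]
    by (metis subsetD)
qed

lemma form_proj_orthonormal:
  assumes m: "sym_bilinear_on S m" and S: "subspace S"
    and E: "finite E" "E \<subseteq> S" "form_orthonormal m E" and v: "v \<in> S"
  shows "form_proj m (span E) v = (\<Sum>y\<in>E. m v y *\<^sub>R y)"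
proof -
  define P where "P = (\<Sum>y\<in>E. m v y *\<^sub>R y)"
  have spanE: "span E \<subseteq> S" using E(2) S by (simp add: span_minimal)
  have P_span: "P \<in> span E" unfolding P_def by (intro span_sum span_mul span_base)
  then have P_S: "P \<in> S" using spanE by auto
  have m_y_P: "m y P = m y v" if y: "y \<in> E" for y
  proof -
    have y_S: "y \<in> S" using y E(2) by auto
    have "m y P = m v y" unfolding P_def by (rule form_orthonormal_coefficient_right[OF m S E y])
    also have "\<dots> = m y v" using v y_S by (rule sym_bilinear_on_commute[OF m])
    finally show ?thesis .
  qed
  have P_proj: "m P w = m v w" if w: "w \<in> span E" for w
  proof -
    obtain d where d: "w = (\<Sum>y\<in>E. d y *\<^sub>R y)"
      using w span_finite[OF E(1)] by auto
    have w_S: "w \<in> S" using w spanE by auto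
    have "m P w = m w P" using P_S w_S by (rule sym_bilinear_on_commute[OF m])
    also have "\<dots> = (\<Sum>y\<in>E. d y * m y P)"
      unfolding d by (rule sym_bilinear_on_sum_left[OF m S E(1,2) P_S])
    also have "\<dots> = (\<Sum>y\<in>E. d y * m y v)"
      using m_y_P by simp
    also have "\<dots> = m v w"
      using sym_bilinear_on_sum_left[OF m S E(1,2) v, of d] sym_bilinear_on_commute[OF m v w_S]
      unfolding d by simp
    finally show ?thesis .
  qed
  have unique: "p = P" if p: "p \<in> span E" "\<forall>w\<in>span E. m p w = m v w" for p
  proof -
    obtain d where d: "p - P = (\<Sum>y\<in>E. d y *\<^sub>R y)"
      using span_diff[OF p(1) P_span] span_finite[OF E(1)] by auto
    have "d z = 0" if z: "z \<in> E" for z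
    proof -
      have "d z = m (p - P) z"
        using form_orthonormal_coefficient[OF m S E z] by (simp add: d)
      also have "\<dots> = m p z - m P z"
        using p(1) spanE P_S z E(2) by (intro sym_bilinear_on_diff_left[OF m]) auto
      finally show ?thesis using p(2) P_proj z by (simp add: span_base)
    qed
    then show "p = P" using d by simp
  qed
  show ?thesis
    unfolding form_proj_def P_def[symmetric]
    by (rule the_equality) (use P_span P_proj unique in blast)+
qed

lemma form_bessel_inequality:
  assumes m: "sym_bilinear_on S m" "psd_on S m" and S: "subspace S"
    and E: "finite E" "E \<subseteq> S" "form_orthonormal m E" and v: "v \<in> S"
  shows "(\<Sum>y\<in>E. (m v y)\<^sup>2) \<le> m v v"
proof -
  define P where "P = (\<Sum>y\<in>E. m v y *\<^sub>R y)"
  have P_S: "P \<in> S" unfolding P_def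
    using E(2) by (intro subspace_sum[OF S] subspace_scale[OF S]) auto
  have m_P_v: "m P v = (\<Sum>y\<in>E. (m v y)\<^sup>2)"
  proof -
    have "m P v = (\<Sum>y\<in>E. m v y * m y v)"
      unfolding P_def by (rule sym_bilinear_on_sum_left[OF m(1) S E(1,2) v])
    also have "\<dots> = (\<Sum>y\<in>E. (m v y)\<^sup>2)"
      using E(2) v
      by (intro sum.cong) (auto simp: power2_eq_square sym_bilinear_on_commute[OF m(1), of _ v])
    finally show ?thesis .
  qed
  have m_P_P: "m P P = (\<Sum>y\<in>E. (m v y)\<^sup>2)"
  proof -
    have "m P P = (\<Sum>y\<in>E. m v y * m y P)"
      unfolding P_def by (rule sym_bilinear_on_sum_left[OF m(1) S E(1,2) P_S[unfolded P_def]])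
    also have "\<dots> = (\<Sum>y\<in>E. (m v y)\<^sup>2)"
      unfolding P_def by (simp add: form_orthonormal_coefficient_right[OF m(1) S E] power2_eq_square)
    finally show ?thesis .
  qed
  have "v - P \<in> S" using S v P_S by (rule subspace_diff)
  then have "0 \<le> m (v - P) (v - P)" using m(2) unfolding psd_on_def by blast
  also have "\<dots> = m v v - m v P - (m P v - m P P)"
    using v P_S S by (simp add: sym_bilinear_on_diff_left[OF m(1)]
        sym_bilinear_on_diff_right[OF m(1) S] subspace_diff)
  finally show ?thesis
    using m_P_v m_P_P sym_bilinear_on_commute[OF m(1) v P_S] by simp
qed

lemma form_proj_energy_le:
  assumes a: "sym_bilinear_on S a" and m: "sym_bilinear_on S m" "psd_on S m"
    and S: "subspace S" and E: "finite E" "E \<subseteq> S" "form_orthonormal m E"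
    and eigen: "\<forall>y\<in>E. \<exists>\<mu>\<le>K. \<forall>w\<in>span E. a y w = \<mu> * m y w"
    and K: "0 \<le> K" and v: "v \<in> S"
  shows "a (form_proj m (span E) v) (form_proj m (span E) v) \<le> K * m v v"
proof -
  define P where "P = (\<Sum>y\<in>E. m v y *\<^sub>R y)"
  have P_span: "P \<in> span E" unfolding P_def by (intro span_sum span_mul span_base)
  have P_S: "P \<in> S" using P_span E(2) S span_minimal by blast
  have term_le: "m v y * a y P \<le> K * (m v y)\<^sup>2" if y: "y \<in> E" for y
  proof -
    obtain \<mu> where "\<mu> \<le> K" and "a y P = \<mu> * m y P" using eigen y P_span by blast
    moreover have "m y P = m v y"
      unfolding P_def by (rule form_orthonormal_coefficient_right[OF m(1) S E y])
    ultimately show ?thesis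
      by (simp add: power2_eq_square mult_right_mono mult.left_commute)
  qed
  have "a P P = (\<Sum>y\<in>E. m v y * a y P)"
    unfolding P_def by (rule sym_bilinear_on_sum_left[OF a S E(1,2) P_S[unfolded P_def]])
  also have "\<dots> \<le> K * (\<Sum>y\<in>E. (m v y)\<^sup>2)"
    unfolding sum_distrib_left by (intro sum_mono term_le)
  also have "\<dots> \<le> K * m v v"
    using form_bessel_inequality[OF m S E v] K by (rule mult_left_mono)
  finally show ?thesis
    using form_proj_orthonormal[OF m(1) S E v] unfolding P_def by simp
qed

lemma form_norm_proj_eigenvectors_le:
  assumes a: "sym_bilinear_on S a" and m: "sym_bilinear_on S m" "psd_on S m"
    and S: "subspace S" and J: "finite J" "U ` J \<subseteq> S"
    and orth: "\<forall>p\<in>J. \<forall>q\<in>J. m (U p) (U q) = (if p = q then 1 else 0)"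
    and eigen: "\<forall>p\<in>J. \<forall>w\<in>span (U ` J). a (U p) w = \<mu> p * m (U p) w"
    and bound: "\<forall>p\<in>J. \<mu> p \<le> K" and K: "0 \<le> K" and v: "v \<in> S"
  shows "form_norm a (form_proj m (span (U ` J)) v) \<le> sqrt K * form_norm m v"
proof -
  have "\<forall>y\<in>U ` J. \<exists>\<mu>\<le>K. \<forall>w\<in>span (U ` J). a y w = \<mu> * m y w"
    using eigen bound by blast
  moreover have "form_orthonormal m (U ` J)" using orth by (rule form_orthonormal_image)
  ultimately
  have "a (form_proj m (span (U ` J)) v) (form_proj m (span (U ` J)) v) \<le> K * m v v"
    using J by (intro form_proj_energy_le[OF a m S _ _ _ _ K v]) auto
  then show ?thesis
    unfolding form_norm_def by (metis real_sqrt_le_mono real_sqrt_mult)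
qed

theorem mainTheorem7:
  fixes H1 :: "'f::real_vector set"
    and hs :: "real set"
    and ah mh :: "real \<Rightarrow> 'f \<Rightarrow> 'f \<Rightarrow> real"
    and Vl :: "real \<Rightarrow> 'f set"
    and nd :: "real \<Rightarrow> nat"
    and Lam :: "real \<Rightarrow> nat \<Rightarrow> real"
    and U :: "real \<Rightarrow> nat \<Rightarrow> 'f"
    and i N :: nat
    and C :: real
  assumes H1_sub: "subspace H1"
    and hs_pos: "\<forall>h\<in>hs. 0 < h"
    and Vl_sub: "\<forall>h\<in>hs. subspace (Vl h) \<and> Vl h \<subseteq> H1 \<and> dim (Vl h) = nd h"
    and a_form: "\<forall>h\<in>hs. sym_bilinear_on H1 (ah h) \<and> psd_on H1 (ah h)"
    and m_form: "\<forall>h\<in>hs. sym_bilinear_on H1 (mh h) \<and> psd_on H1 (mh h)"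
    and basis: "\<forall>h\<in>hs. span (U h ` {1..nd h}) = Vl h"
    and eig_in: "\<forall>h\<in>hs. \<forall>p\<in>{1..nd h}. U h p \<in> Vl h"
    and eig_eq: "\<forall>h\<in>hs. \<forall>p\<in>{1..nd h}. \<forall>w\<in>Vl h. ah h (U h p) w = Lam h p * mh h (U h p) w"
    and orthonormal: "\<forall>h\<in>hs. \<forall>p\<in>{1..nd h}. \<forall>q\<in>{1..nd h}.
                         mh h (U h p) (U h q) = (if p = q then 1 else 0)"
    and increasing: "\<forall>h\<in>hs. \<forall>p\<in>{1..nd h}. \<forall>q\<in>{1..nd h}. p \<le> q \<longrightarrow> Lam h p \<le> Lam h q"
    and i_pos: "1 \<le> i" and N_pos: "1 \<le> N"
    and J_in: "\<forall>h\<in>hs. i + N - 1 \<le> nd h"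
    and eig_bound: "\<forall>h\<in>hs. \<forall>j\<in>{i..i + N - 1}. Lam h j \<le> C"
  shows "\<exists>c>0. \<forall>h\<in>hs. \<forall>v\<in>H1.
           form_norm (ah h) (form_proj (mh h) (span (U h ` {i..i + N - 1})) v)
             \<le> c * form_norm (mh h) v"
proof (intro exI[of _ "sqrt (max C 1)"] conjI ballI)
  show "0 < sqrt (max C 1)" by simp
  fix h v assume h: "h \<in> hs" and v: "v \<in> H1"
  define J where "J = {i..i + N - 1}"
  have J_eig: "J \<subseteq> {1..nd h}" using J_in h i_pos unfolding J_def by auto
  have "U h ` J \<subseteq> Vl h" using eig_in h J_eig by auto
  then have span_J: "span (U h ` J) \<subseteq> Vl h" using Vl_sub h by (simp add: span_minimal)
  show "form_norm (ah h) (form_proj (mh h) (span (U h ` {i..i + N - 1})) v)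
      \<le> sqrt (max C 1) * form_norm (mh h) v"
    unfolding J_def[symmetric]
  proof (rule form_norm_proj_eigenvectors_le[OF _ _ _ H1_sub])
    show "U h ` J \<subseteq> H1" using span_J span_superset Vl_sub h by blast
    show "\<forall>p\<in>J. \<forall>q\<in>J. mh h (U h p) (U h q) = (if p = q then 1 else 0)"
      using orthonormal h J_eig by blast
    show "\<forall>p\<in>J. \<forall>w\<in>span (U h ` J). ah h (U h p) w = Lam h p * mh h (U h p) w"
      using eig_eq h J_eig span_J by blast
    show "\<forall>p\<in>J. Lam h p \<le> max C 1" using eig_bound h unfolding J_def by force
  qed (use a_form m_form h v in \<open>auto simp: J_def\<close>)
qed

end
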